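(* Let $q=p^n$ be a prime power with $q\equiv 5\pmod 8$, let $\chi$ be a generator of the cyclic group $\widehat{\mathbb{F}_q^{\times}}$ of multiplicative characters of $\mathbb{F}_q$, and let $1\le r\le q-2$ be an integer. Let $a_1,\dots,a_{(q-1)/4}$ be the distinct elements of $D_4=\{x^4:x\in\mathbb{F}_q^{\times}\}$ (in any fixed order) and let $$B_{q,4}(\chi^r):=\left[\chi^r(a_i+a_j)+\chi^r(a_i-a_j)\right]_{1\le i,j\le (q-1)/4}.$$ Then $$\det(B_{q,4}(\chi^r))=(-1)^r\left(\frac{q}{2}\right)^{\frac{q-1}{4}}\prod_{k=0}^{(q-5)/4}\ {}_{2}F_{1}\left(\begin{array}{cc}\chi^{-r} & \chi^{4k}\\ & \chi^{4k+r}\end{array}\Bigg|\,-1\right)_q.$$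
   Context: Every multiplicative character $\psi$ of $\mathbb{F}_q$ is extended to $\mathbb{F}_q$ by $\psi(0)=0$ (including the trivial character). For characters $A,B$, the Jacobi sum is $J_q(A,B)=\sum_{x\in\mathbb{F}_q}A(x)B(1-x)$, and Greene's binomial coefficient is $\binom{A}{B}:=\frac{B(-1)}{q}J_q(A,\bar B)$, where $\bar B=B^{-1}$. For characters $A_0,A_1,B_1$ and $x\in\mathbb{F}_q$, Greene's Gaussian hypergeometric function is $${}_{2}F_{1}\left(\begin{array}{cc}A_0 & A_1\\ & B_1\end{array}\Bigg|\,x\right)_q:=\frac{q}{q-1}\sum_{\psi\in\widehat{\mathbb{F}_q^{\times}}}\binom{A_0\psi}{\psi}\binom{A_1\psi}{B_1\psi}\psi(x).$$ *)

theory Defs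
  imports Complex_Main "Jordan_Normal_Form.Determinant"
begin

text \<open>Multiplicative characters of a finite field 'a, extended by psi(0) = 0
  (also for the trivial character).\<close>
definition mult_chars :: "('a::{finite,field} \<Rightarrow> complex) set" where
  "mult_chars = {\<psi>. \<psi> 0 = 0 \<and> \<psi> 1 = 1 \<and> (\<forall>x y. \<psi> (x * y) = \<psi> x * \<psi> y)}"

definition char_pow :: "('a::{finite,field} \<Rightarrow> complex) \<Rightarrow> int \<Rightarrow> 'a \<Rightarrow> complex" where
  "char_pow \<chi> k = (\<lambda>x. if x = 0 then 0 else (\<chi> x) powi k)"

definition char_mult :: "('a \<Rightarrow> complex) \<Rightarrow> ('a \<Rightarrow> complex) \<Rightarrow> 'a \<Rightarrow> complex" where
  "char_mult A B = (\<lambda>x. A x * B x)"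

definition char_inv :: "('a \<Rightarrow> complex) \<Rightarrow> 'a \<Rightarrow> complex" where
  "char_inv B = (\<lambda>x. inverse (B x))"

definition is_char_generator :: "('a::{finite,field} \<Rightarrow> complex) \<Rightarrow> bool" where
  "is_char_generator \<chi> \<longleftrightarrow> \<chi> \<in> mult_chars \<and> (\<forall>\<psi>\<in>mult_chars. \<exists>k::int. \<psi> = char_pow \<chi> k)"

definition jacobi_sum :: "('a::{finite,field} \<Rightarrow> complex) \<Rightarrow> ('a \<Rightarrow> complex) \<Rightarrow> complex" where
  "jacobi_sum A B = (\<Sum>x\<in>(UNIV::'a set). A x * B (1 - x))"

definition greene_binom :: "('a::{finite,field} \<Rightarrow> complex) \<Rightarrow> ('a \<Rightarrow> complex) \<Rightarrow> complex" where
  "greene_binom A B = B (-1) / of_nat (card (UNIV::'a set)) * jacobi_sum A (char_inv B)"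

definition greene_2F1 :: "('a::{finite,field} \<Rightarrow> complex) \<Rightarrow> ('a \<Rightarrow> complex) \<Rightarrow> ('a \<Rightarrow> complex) \<Rightarrow> 'a \<Rightarrow> complex" where
  "greene_2F1 A0 A1 B1 x =
     of_nat (card (UNIV::'a set)) / (of_nat (card (UNIV::'a set)) - 1) *
     (\<Sum>\<psi>\<in>mult_chars. greene_binom (char_mult A0 \<psi>) \<psi> *
         greene_binom (char_mult A1 \<psi>) (char_mult B1 \<psi>) * \<psi> x)"

definition fourth_powers :: "'a::{finite,field} set" where
  "fourth_powers = {y. \<exists>x. x \<noteq> 0 \<and> y = x ^ 4}"

definition B_mat :: "('a::{finite,field} \<Rightarrow> complex) \<Rightarrow> 'a list \<Rightarrow> complex mat" where
  "B_mat \<psi> as = mat (length as) (length as)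
     (\<lambda>(i,j). \<psi> (as ! i + as ! j) + \<psi> (as ! i - as ! j))"

end

theory Submission
  imports Defs "HOL-Algebra.Algebraic_Closure_Type"
begin

text \<open>
  Write \<open>\<psi> = \<chi>\<^sup>r\<close> and \<open>D\<^sub>4\<close> for the cyclic group of fourth powers, of odd order
  \<open>m = (q - 1)/4\<close>. For \<open>a \<in> D\<^sub>4\<close> the substitution \<open>u = a t\<close> gives
  \<open>\<Sum>u\<in>D\<^sub>4. (\<psi>(a + u) + \<psi>(a - u)) \<chi>(u)\<^sup>2\<^sup>l = \<psi>(a) \<chi>(a)\<^sup>2\<^sup>l \<mu>\<^sub>l\<close> with
  \<open>\<mu>\<^sub>l = \<Sum>t\<in>D\<^sub>4. (\<psi>(1 + t) + \<psi>(1 - t)) \<chi>(t)\<^sup>2\<^sup>l\<close>, i.e. \<open>B V = D V M\<close> where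
  \<open>V = [\<chi>(a\<^sub>i)\<^sup>2\<^sup>l]\<close> is the (invertible) character table of \<open>D\<^sub>4\<close>, \<open>D = diag (\<psi>(a\<^sub>i))\<close> has
  determinant \<open>1\<close> and \<open>M = diag (\<mu>\<^sub>l)\<close>. So \<open>det B = \<Prod>l<m. \<mu>\<^sub>l\<close>.
  Since \<open>q \<equiv> 5 (mod 8)\<close>, \<open>-1\<close> is a square but not a fourth power, so the nonzero squares
  are \<open>D\<^sub>4 \<union> -D\<^sub>4\<close> and \<open>2 \<mu>\<^sub>l = \<Sum>t. \<psi>(1 - t) \<psi>(1 + t) \<chi>(t)\<^sup>4\<^sup>l\<close>. Greene's integral
  representation of \<open>\<^sub>2F\<^sub>1\<close> at \<open>-1\<close>, after the substitution \<open>y = t/(1 + t)\<close>, identifies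
  this sum with \<open>(-1)\<^sup>r q\<close> times the \<open>l\<close>-th factor of the product.
\<close>

section \<open>Finite fields\<close>

lemma finite_field_mult_generator:
  "\<exists>g::'a::{finite,field}. g \<noteq> 0 \<and> (\<forall>x. x \<noteq> 0 \<longrightarrow> (\<exists>i::nat. x = g ^ i))"
proof -
  let ?R = "ring_of_type_algebra :: 'a ring"
  have pow: "a [^]\<^bsub>?R\<^esub> i = a ^ i" for a and i :: nat
    by (induction i) (simp_all add: ring_of_type_algebra_def)
  have units: "carrier (Multiplicative_Group.mult_of ?R) = UNIV - {0}"
    by (simp add: ring_of_type_algebra_def Multiplicative_Group.mult_of_def)
  have "finite (carrier ?R)" by (simp add: ring_of_type_algebra_def)
  then obtain a where "a \<in> carrier (Multiplicative_Group.mult_of ?R)"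
    and "carrier (Multiplicative_Group.mult_of ?R) = {a [^]\<^bsub>?R\<^esub> i | i::nat. i \<in> UNIV}"
    using field.finite_field_mult_group_has_gen[OF field_from_type_algebra] by blast
  then show ?thesis
    unfolding units pow by (intro exI[of _ a]) blast
qed

lemma finite_field_pow_card_minus_one:
  fixes x :: "'a::{finite,field}"
  assumes "x \<noteq> 0"
  shows "x ^ (card (UNIV::'a set) - 1) = 1"
proof -
  let ?N = "UNIV - {0::'a}"
  have "(\<Prod>y\<in>?N. x * y) = (\<Prod>y\<in>?N. y)"
    by (rule prod.reindex_bij_witness[where i="\<lambda>y. y / x" and j="\<lambda>y. x * y"])
       (use assms in auto)
  moreover have "(\<Prod>y\<in>?N. x * y) = x ^ card ?N * (\<Prod>y\<in>?N. y)"
    by (simp add: prod.distrib)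
  moreover have "(\<Prod>y\<in>?N. y) \<noteq> 0" by simp
  ultimately show ?thesis by (simp add: card_Diff_singleton)
qed

lemma power_eq_power_mod:
  fixes c :: "'b::monoid_mult"
  assumes "c ^ n = 1"
  shows "c ^ a = c ^ (a mod n)"
proof -
  have "c ^ a = c ^ (n * (a div n) + a mod n)" by simp
  also have "\<dots> = (c ^ n) ^ (a div n) * c ^ (a mod n)" by (simp only: power_add power_mult)
  finally show ?thesis using assms by simp
qed

lemma sum_nonzero_squares:
  fixes G :: "'a::{finite,field} \<Rightarrow> 'b::comm_ring_1"
  assumes "(2::'a) \<noteq> 0"
  shows "(\<Sum>t\<in>UNIV - {0}. G (t ^ 2)) = 2 * (\<Sum>u\<in>(\<lambda>t. t ^ 2) ` (UNIV - {0}). G u)"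
proof -
  have "(\<Sum>t\<in>UNIV - {0}. G (t ^ 2)) =
        (\<Sum>u\<in>(\<lambda>t. t ^ 2) ` (UNIV - {0}). \<Sum>t\<in>{t. t \<in> UNIV - {0} \<and> t ^ 2 = u}. G (t ^ 2))"
    by (rule sum.image_gen) simp
  also have "\<dots> = (\<Sum>u\<in>(\<lambda>t. t ^ 2) ` (UNIV - {0}). 2 * G u)"
  proof (rule sum.cong[OF refl])
    fix u assume "u \<in> (\<lambda>t. t ^ 2) ` (UNIV - {0::'a})"
    then obtain s where s: "s \<noteq> 0" and u: "u = s ^ 2" by blast
    have roots: "{t. t \<in> UNIV - {0} \<and> t ^ 2 = u} = {s, -s}"
      using s u by (auto simp: power2_eq_iff)
    have "s \<noteq> -s"
    proof
      assume "s = -s"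
      then have "2 * s = 0" by (metis add_eq_0_iff2 mult_2)
      then show False using s assms by simp
    qed
    then show "(\<Sum>t\<in>{t. t \<in> UNIV - {0} \<and> t ^ 2 = u}. G (t ^ 2)) = 2 * G u"
      unfolding roots using u by simp
  qed
  finally show ?thesis by (simp add: sum_distrib_left)
qed

lemma fourth_powers_nonzero: "t \<in> fourth_powers \<Longrightarrow> t \<noteq> 0"
  unfolding fourth_powers_def by auto

lemma bij_betw_mult_fourth_powers:
  fixes a :: "'a::{finite,field}"
  assumes "a \<in> fourth_powers"
  shows "bij_betw ((*) a) fourth_powers fourth_powers"
proof -
  obtain x where x: "x \<noteq> 0" and a: "a = x ^ 4" using assms unfolding fourth_powers_def by blast
  show ?thesis
  proof (rule bij_betw_byWitness[where f'="\<lambda>t. t / a"])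
    show "(*) a ` fourth_powers \<subseteq> fourth_powers"
    proof
      fix z assume "z \<in> (*) a ` fourth_powers"
      then obtain y where "y \<noteq> 0" "z = a * y ^ 4" unfolding fourth_powers_def by blast
      then have "z = (x * y) ^ 4" "x * y \<noteq> 0" using a x by (simp_all add: power_mult_distrib)
      then show "z \<in> fourth_powers" unfolding fourth_powers_def by blast
    qed
    show "(\<lambda>t. t / a) ` fourth_powers \<subseteq> fourth_powers"
    proof
      fix z assume "z \<in> (\<lambda>t. t / a) ` fourth_powers"
      then obtain y where "y \<noteq> 0" "z = y ^ 4 / a" unfolding fourth_powers_def by blast
      then have "z = (y / x) ^ 4" "y / x \<noteq> 0" using a x by (simp_all add: power_divide)
      then show "z \<in> fourth_powers" unfolding fourth_powers_def by blast
    qed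
  qed (use x a in simp_all)
qed

section \<open>Multiplicative characters\<close>

lemma mult_chars_zero: "\<phi> \<in> mult_chars \<Longrightarrow> \<phi> 0 = 0"
  by (simp add: mult_chars_def)

lemma mult_chars_one: "\<phi> \<in> mult_chars \<Longrightarrow> \<phi> 1 = 1"
  by (simp add: mult_chars_def)

lemma mult_chars_mult: "\<phi> \<in> mult_chars \<Longrightarrow> \<phi> (x * y) = \<phi> x * \<phi> y"
  by (simp add: mult_chars_def)

lemma mult_chars_inverse:
  assumes "\<phi> \<in> mult_chars"
  shows "\<phi> (inverse (x::'a::{finite,field})) = inverse (\<phi> x)"
proof (cases "x = 0")
  case True
  then show ?thesis using mult_chars_zero[OF assms] by simp
next
  case False
  then have "\<phi> x * \<phi> (inverse x) = 1"
    using mult_chars_mult[OF assms, of x "inverse x"] mult_chars_one[OF assms] by simp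
  then show ?thesis by (metis inverse_unique)
qed

lemma mult_chars_nonzero:
  assumes "\<phi> \<in> mult_chars" and "(x::'a::{finite,field}) \<noteq> 0"
  shows "\<phi> x \<noteq> 0"
proof
  assume "\<phi> x = 0"
  then have "\<phi> (x * inverse x) = 0" using mult_chars_mult[OF assms(1)] by simp
  then show False using assms mult_chars_one by fastforce
qed

lemma mult_chars_divide:
  "\<phi> \<in> mult_chars \<Longrightarrow> \<phi> ((x::'a::{finite,field}) / y) = \<phi> x / \<phi> y"
  by (simp add: divide_inverse mult_chars_mult mult_chars_inverse)

lemma mult_chars_power:
  "\<phi> \<in> mult_chars \<Longrightarrow> \<phi> ((x::'a::{finite,field}) ^ k) = \<phi> x ^ k"
  by (induction k) (simp_all add: mult_chars_one mult_chars_mult)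

lemma mult_chars_minus_one_squared:
  "\<phi> \<in> mult_chars \<Longrightarrow> \<phi> (-1::'a::{finite,field}) * \<phi> (-1) = 1"
  by (metis mult_chars_one mult_chars_mult mult_minus1_right minus_minus)

lemma char_inv_in_mult_chars: "\<phi> \<in> mult_chars \<Longrightarrow> char_inv \<phi> \<in> mult_chars"
  by (simp add: mult_chars_def char_inv_def)

lemma char_mult_in_mult_chars:
  "\<phi> \<in> mult_chars \<Longrightarrow> \<psi> \<in> mult_chars \<Longrightarrow> char_mult \<phi> \<psi> \<in> mult_chars"
  by (simp add: mult_chars_def char_mult_def)

lemma char_pow_of_nat: "char_pow \<chi> (int k) x = (if x = 0 then 0 else \<chi> x ^ k)"
  by (simp add: char_pow_def)

lemma char_pow_uminus: "char_pow \<chi> (- k) = char_inv (char_pow \<chi> k)"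
  by (simp add: fun_eq_iff char_pow_def char_inv_def power_int_minus)

lemma char_pow_add:
  assumes "\<chi> \<in> mult_chars"
  shows "char_pow \<chi> (a + b) = char_mult (char_pow \<chi> a) (char_pow \<chi> b)"
  unfolding char_mult_def using mult_chars_nonzero[OF assms]
  by (auto simp: fun_eq_iff char_pow_def power_int_add)

lemma char_pow_in_mult_chars:
  "\<chi> \<in> mult_chars \<Longrightarrow> char_pow \<chi> k \<in> (mult_chars :: ('a::{finite,field} \<Rightarrow> complex) set)"
  using mult_chars_one mult_chars_mult
  by (auto simp: mult_chars_def char_pow_def power_int_mult_distrib)

lemma sum_char_plus_minus_rescale:
  fixes \<psi> f :: "'a::{finite,field} \<Rightarrow> complex"
  assumes \<psi>: "\<psi> \<in> mult_chars" and f: "\<And>x y. f (x * y) = f x * f y"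
    and H: "bij_betw ((*) a) H H"
  shows "(\<Sum>u\<in>H. (\<psi> (a + u) + \<psi> (a - u)) * f u) =
         \<psi> a * f a * (\<Sum>t\<in>H. (\<psi> (1 + t) + \<psi> (1 - t)) * f t)"
proof -
  have "(\<Sum>u\<in>H. (\<psi> (a + u) + \<psi> (a - u)) * f u) =
        (\<Sum>t\<in>H. (\<psi> (a + a * t) + \<psi> (a - a * t)) * f (a * t))"
    by (rule sum.reindex_bij_betw[OF H, symmetric])
  also have "\<dots> = (\<Sum>t\<in>H. \<psi> a * f a * ((\<psi> (1 + t) + \<psi> (1 - t)) * f t))"
  proof (rule sum.cong[OF refl])
    fix t
    have "\<psi> (a + a * t) = \<psi> a * \<psi> (1 + t)" "\<psi> (a - a * t) = \<psi> a * \<psi> (1 - t)"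
      using mult_chars_mult[OF \<psi>, of a "1 + t"] mult_chars_mult[OF \<psi>, of a "1 - t"]
      by (simp_all add: distrib_left right_diff_distrib)
    then show "(\<psi> (a + a * t) + \<psi> (a - a * t)) * f (a * t) =
        \<psi> a * f a * ((\<psi> (1 + t) + \<psi> (1 - t)) * f t)"
      by (simp add: f algebra_simps)
  qed
  finally show ?thesis by (simp add: sum_distrib_left)
qed

lemma cis_root_pow_eq_one_iff:
  assumes "n > 0"
  shows "cis (2 * pi / real n) ^ a = 1 \<longleftrightarrow> n dvd a"
proof
  assume "cis (2 * pi / real n) ^ a = 1"
  then have "Re (cis (real a * (2 * pi / real n))) = 1" by (simp add: DeMoivre)
  then have "cos (real a * (2 * pi / real n)) = 1" by simp
  then obtain z :: int where "real a * (2 * pi / real n) = real_of_int z * 2 * pi"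
    by (auto simp: cos_one_2pi_int)
  then have "real a = real_of_int z * real n" using assms by (simp add: field_simps)
  then have "int a = z * int n" by (metis of_int_eq_iff of_int_mult of_int_of_nat_eq)
  then have "int n dvd int a" by simp
  then show "n dvd a" by simp
next
  assume "n dvd a"
  then obtain k where "a = n * k" by blast
  then show "cis (2 * pi / real n) ^ a = 1"
    using assms by (simp add: DeMoivre power_mult)
qed

locale char_generator =
  fixes g :: "'a::{finite,field}" and \<chi> :: "'a \<Rightarrow> complex" and n :: nat
  assumes g_nonzero: "g \<noteq> 0"
    and g_generates: "\<And>x. x \<noteq> 0 \<Longrightarrow> \<exists>i. x = g ^ i"
    and chi_generator: "is_char_generator \<chi>"
  defines n_def: "n \<equiv> card (UNIV::'a set) - 1"
begin

lemma n_pos: "0 < n"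
proof -
  have "card {0::'a, 1} \<le> card (UNIV::'a set)" by (rule card_mono) simp_all
  then show ?thesis by (simp add: n_def)
qed

lemma g_pow_n: "g ^ n = 1"
  using finite_field_pow_card_minus_one[OF g_nonzero] by (simp add: n_def)

lemma nonzero_eq_g_pow_image: "UNIV - {0} = (\<lambda>i. g ^ i) ` {..<n}"
proof
  show "UNIV - {0} \<subseteq> (\<lambda>i. g ^ i) ` {..<n}"
  proof
    fix x :: 'a assume "x \<in> UNIV - {0}"
    then obtain i where "x = g ^ i" using g_generates by blast
    then have "x = g ^ (i mod n)" using power_eq_power_mod[OF g_pow_n] by simp
    then show "x \<in> (\<lambda>i. g ^ i) ` {..<n}" using n_pos by auto
  qed
qed (use g_nonzero in auto)

lemma inj_on_g_pow: "inj_on (\<lambda>i. g ^ i) {..<n}"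
proof (rule eq_card_imp_inj_on)
  have "card ((\<lambda>i. g ^ i) ` {..<n}) = card (UNIV - {0::'a})"
    by (simp add: nonzero_eq_g_pow_image)
  then show "card ((\<lambda>i. g ^ i) ` {..<n}) = card {..<n}"
    by (simp add: card_Diff_singleton n_def)
qed simp

lemma g_pow_eq_iff: "g ^ a = g ^ b \<longleftrightarrow> a mod n = b mod n"
proof
  assume "g ^ a = g ^ b"
  then have "g ^ (a mod n) = g ^ (b mod n)" using power_eq_power_mod[OF g_pow_n] by simp
  then show "a mod n = b mod n" using inj_on_g_pow n_pos unfolding inj_on_def by simp
qed (metis power_eq_power_mod[OF g_pow_n])

lemma g_pow_eq_one_iff: "g ^ a = 1 \<longleftrightarrow> n dvd a"
  using g_pow_eq_iff[of a 0] by (simp add: mod_eq_0_iff_dvd)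

lemma chi_in_mult_chars: "\<chi> \<in> mult_chars"
  using chi_generator by (simp add: is_char_generator_def)

lemma chi_pow_n: "x \<noteq> 0 \<Longrightarrow> \<chi> x ^ n = 1"
  using finite_field_pow_card_minus_one[of x] mult_chars_power[OF chi_in_mult_chars, of x n]
    mult_chars_one[OF chi_in_mult_chars]
  by (simp add: n_def)

text \<open>Every character is a power of \<open>\<chi>\<close>, and \<open>g\<^sup>i \<mapsto> \<omega>\<^sup>i\<close> for a primitive
  \<open>n\<close>-th root of unity \<open>\<omega>\<close> is a faithful character.\<close>
lemma chi_eq_one_iff:
  assumes "z \<noteq> 0"
  shows "\<chi> z = 1 \<longleftrightarrow> z = 1"
proof
  assume "\<chi> z = 1"
  obtain dlog where dlog: "\<And>x. x \<noteq> 0 \<Longrightarrow> g ^ dlog x = x"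
    using g_generates by metis
  define \<omega> where "\<omega> = cis (2 * pi / real n)"
  have \<omega>: "\<omega> ^ a = 1 \<longleftrightarrow> n dvd a" for a
    unfolding \<omega>_def using cis_root_pow_eq_one_iff n_pos by blast
  have \<omega>_mod: "\<omega> ^ a = \<omega> ^ b" if "a mod n = b mod n" for a b
    using power_eq_power_mod[of \<omega> n a] power_eq_power_mod[of \<omega> n b] \<omega> that by simp
  define \<theta> where "\<theta> x = (if x = 0 then 0 else \<omega> ^ dlog x)" for x
  have "\<theta> (x * y) = \<theta> x * \<theta> y" for x y
  proof (cases "x = 0 \<or> y = 0")
    case False
    then have "g ^ dlog (x * y) = g ^ (dlog x + dlog y)" by (simp add: dlog power_add)
    then have "\<omega> ^ dlog (x * y) = \<omega> ^ (dlog x + dlog y)" by (intro \<omega>_mod) (simp add: g_pow_eq_iff)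
    then show ?thesis using False by (simp add: \<theta>_def power_add)
  qed (auto simp: \<theta>_def)
  moreover have "\<theta> 1 = 1"
    using dlog[of 1] \<omega>_mod[of "dlog 1" 0] g_pow_eq_iff[of "dlog 1" 0] by (simp add: \<theta>_def)
  ultimately have "\<theta> \<in> mult_chars" by (simp add: mult_chars_def \<theta>_def)
  then obtain k where "\<theta> = char_pow \<chi> k"
    using chi_generator unfolding is_char_generator_def by blast
  then have "\<theta> z = 1" using assms \<open>\<chi> z = 1\<close> by (simp add: char_pow_def)
  then have "g ^ dlog z = 1" using assms \<omega> g_pow_eq_one_iff by (simp add: \<theta>_def)
  then show "z = 1" using dlog[OF assms] by simp
qed (simp add: mult_chars_one[OF chi_in_mult_chars])

lemma chi_g_pow_eq_one_iff: "\<chi> g ^ a = 1 \<longleftrightarrow> n dvd a"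
  using chi_eq_one_iff[of "g ^ a"] g_nonzero g_pow_eq_one_iff
  by (simp add: mult_chars_power[OF chi_in_mult_chars])

lemma chi_powi_eq_pow_mod:
  assumes "x \<noteq> 0"
  shows "\<chi> x powi k = \<chi> x ^ nat (k mod int n)"
proof -
  have nz: "\<chi> x \<noteq> 0" by (rule mult_chars_nonzero[OF chi_in_mult_chars assms])
  have "\<chi> x powi k = \<chi> x powi (int n * (k div int n) + k mod int n)" by simp
  also have "\<dots> = \<chi> x powi (int n * (k div int n)) * \<chi> x powi (k mod int n)"
    by (rule power_int_add) (simp add: nz)
  also have "\<chi> x powi (int n * (k div int n)) = 1"
    by (simp add: power_int_mult chi_pow_n[OF assms])
  also have "\<chi> x powi (k mod int n) = \<chi> x ^ nat (k mod int n)"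
    using n_pos by (simp add: power_int_def)
  finally show ?thesis by simp
qed

lemma mult_chars_eq_char_pow_image: "mult_chars = (\<lambda>k. char_pow \<chi> (int k)) ` {..<n}"
proof
  show "mult_chars \<subseteq> (\<lambda>k. char_pow \<chi> (int k)) ` {..<n}"
  proof
    fix \<phi> :: "'a \<Rightarrow> complex" assume "\<phi> \<in> mult_chars"
    then obtain k where k: "\<phi> = char_pow \<chi> k"
      using chi_generator unfolding is_char_generator_def by blast
    have "\<phi> = char_pow \<chi> (int (nat (k mod int n)))"
      unfolding k by (simp add: fun_eq_iff char_pow_def chi_powi_eq_pow_mod)
    moreover have "nat (k mod int n) < n" using n_pos by (simp add: nat_less_iff)
    ultimately show "\<phi> \<in> (\<lambda>k. char_pow \<chi> (int k)) ` {..<n}" by blast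
  qed
qed (use char_pow_in_mult_chars[OF chi_in_mult_chars] in auto)

lemma inj_on_char_pow: "inj_on (\<lambda>k. char_pow \<chi> (int k)) {..<n}"
proof (rule inj_onI)
  fix a b assume a: "a \<in> {..<n}" and b: "b \<in> {..<n}"
    and "char_pow \<chi> (int a) = char_pow \<chi> (int b)"
  then have "char_pow \<chi> (int a) g = char_pow \<chi> (int b) g" by simp
  then have "\<chi> (g ^ a) = \<chi> (g ^ b)"
    using g_nonzero by (simp add: char_pow_of_nat mult_chars_power[OF chi_in_mult_chars])
  then have "\<chi> (g ^ a / g ^ b) = 1"
    using g_nonzero mult_chars_nonzero[OF chi_in_mult_chars]
    by (simp add: mult_chars_divide[OF chi_in_mult_chars])
  then have "g ^ a = g ^ b" using g_nonzero chi_eq_one_iff by simp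
  then show "a = b" using a b by (simp add: g_pow_eq_iff)
qed

lemma sum_mult_chars: "(\<Sum>\<phi>\<in>mult_chars. \<phi> (z::'a)) = (if z = 1 then of_nat n else (0::complex))"
proof (cases "z = 0")
  case True
  then show ?thesis by (simp add: mult_chars_zero)
next
  case False
  have "(\<Sum>\<phi>\<in>mult_chars. \<phi> z) = (\<Sum>k<n. \<chi> z ^ k)"
    unfolding mult_chars_eq_char_pow_image
    using False by (simp add: sum.reindex[OF inj_on_char_pow] char_pow_of_nat)
  also have "\<dots> = (if z = 1 then of_nat n else 0)"
    using False chi_eq_one_iff chi_pow_n
    by (simp add: sum_gp_strict mult_chars_one[OF chi_in_mult_chars])
  finally show ?thesis .
qed

end

section \<open>Greene's hypergeometric function at \<open>-1\<close>\<close>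

lemma greene_binom_product:
  fixes A0 A1 B1 :: "'a::{finite,field} \<Rightarrow> complex"
  assumes \<phi>: "\<phi> \<in> mult_chars"
  shows "greene_binom (char_mult A0 \<phi>) \<phi> * greene_binom (char_mult A1 \<phi>) (char_mult B1 \<phi>) * \<phi> x =
    B1 (-1) / of_nat (card (UNIV::'a set)) ^ 2 *
    (\<Sum>u\<in>UNIV. \<Sum>y\<in>UNIV. A0 u * A1 y * inverse (B1 (1 - y)) *
                             \<phi> (x * u * y / ((1 - u) * (1 - y))))"
proof -
  define q where "q = (of_nat (card (UNIV::'a set)) :: complex)"
  define S0 where "S0 = (\<Sum>u\<in>UNIV. A0 u * (\<phi> u * inverse (\<phi> (1 - u))))"
  define S1 where "S1 = (\<Sum>y\<in>UNIV. A1 y * inverse (B1 (1 - y)) * (\<phi> y * inverse (\<phi> (1 - y))))"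
  have binom0: "greene_binom (char_mult A0 \<phi>) \<phi> = \<phi> (-1) / q * S0"
    by (simp add: greene_binom_def jacobi_sum_def char_mult_def char_inv_def q_def S0_def mult_ac)
  have binom1: "greene_binom (char_mult A1 \<phi>) (char_mult B1 \<phi>) = B1 (-1) * \<phi> (-1) / q * S1"
    by (simp add: greene_binom_def jacobi_sum_def char_mult_def char_inv_def q_def S1_def
        inverse_mult_distrib mult_ac)
  have "greene_binom (char_mult A0 \<phi>) \<phi> * greene_binom (char_mult A1 \<phi>) (char_mult B1 \<phi>) * \<phi> x =
        B1 (-1) / q ^ 2 * (\<phi> (-1) * \<phi> (-1)) * (\<phi> x * (S0 * S1))"
    unfolding binom0 binom1 by (simp add: power2_eq_square divide_inverse mult_ac)
  also have "\<phi> (-1) * \<phi> (-1) = 1"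
    by (rule mult_chars_minus_one_squared[OF \<phi>])
  also have "\<phi> x * (S0 * S1) = (\<Sum>u\<in>UNIV. \<Sum>y\<in>UNIV. \<phi> x *
      (A0 u * (\<phi> u * inverse (\<phi> (1 - u))) *
       (A1 y * inverse (B1 (1 - y)) * (\<phi> y * inverse (\<phi> (1 - y))))))"
    unfolding S0_def S1_def sum_product by (simp only: sum_distrib_left)
  also have "\<dots> = (\<Sum>u\<in>UNIV. \<Sum>y\<in>UNIV. A0 u * A1 y * inverse (B1 (1 - y)) *
                             \<phi> (x * u * y / ((1 - u) * (1 - y))))"
    by (intro sum.cong refl)
       (simp add: mult_chars_divide[OF \<phi>] mult_chars_mult[OF \<phi>] mult_chars_inverse[OF \<phi>]
         divide_inverse inverse_mult_distrib mult_ac)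
  finally show ?thesis by (simp only: q_def mult_1_right)
qed

lemma div_one_minus_prod_eq_one_iff:
  fixes x y u :: "'a::field"
  assumes "x \<noteq> 0" "y \<noteq> 0" "y \<noteq> 1"
  shows "x * u * y / ((1 - u) * (1 - y)) = 1 \<longleftrightarrow> (1 - y + x * y) * u = 1 - y"
proof (cases "u = 1")
  case True
  then show ?thesis using assms by simp
next
  case False
  then have "(1 - u) * (1 - y) \<noteq> 0" using assms by simp
  then show ?thesis by (simp add: field_simps)
qed

lemma sum_subst_div_one_plus:
  fixes \<psi> A :: "'a::{finite,field} \<Rightarrow> complex"
  assumes \<psi>: "\<psi> \<in> mult_chars" and A: "A \<in> mult_chars"
  shows "(\<Sum>y\<in>UNIV. inverse (\<psi> ((1 - y) / (1 - 2 * y))) * A y * inverse (A (1 - y) * \<psi> (1 - y))) =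
         (\<Sum>t\<in>UNIV. \<psi> (1 - t) * \<psi> (1 + t) * A t)"
    (is "(\<Sum>y\<in>UNIV. ?f y) = (\<Sum>t\<in>UNIV. ?h t)")
proof -
  have subst: "?f (t / (1 + t)) = ?h t" if "t \<noteq> -1" for t
  proof -
    have t: "1 + t \<noteq> 0" using that by (metis add_eq_0_iff)
    have y: "1 - t / (1 + t) = 1 / (1 + t)" using t by (simp add: field_simps)
    have "1 - 2 * (t / (1 + t)) = (1 - t) / (1 + t)" using t by (simp add: field_simps)
    then have x: "(1 - t / (1 + t)) / (1 - 2 * (t / (1 + t))) = 1 / (1 - t)"
      unfolding y using t by (cases "t = 1") (simp_all add: field_simps)
    have "?f (t / (1 + t)) = \<psi> (1 - t) * (A t / A (1 + t)) * (A (1 + t) * \<psi> (1 + t))"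
      unfolding x unfolding y
      by (simp add: mult_chars_divide[OF \<psi>] mult_chars_divide[OF A] mult_chars_one[OF \<psi>]
          mult_chars_one[OF A])
    also have "\<dots> = ?h t" using mult_chars_nonzero[OF A t] by simp
    finally show ?thesis .
  qed
  have "(\<Sum>y\<in>UNIV. ?f y) = (\<Sum>y\<in>UNIV - {1}. ?f y)"
    by (rule sum.mono_neutral_right) (simp_all add: mult_chars_zero[OF A])
  also have "\<dots> = (\<Sum>t\<in>UNIV - {-1}. ?f (t / (1 + t)))"
  proof (rule sum.reindex_bij_witness[where i="\<lambda>t. t / (1 + t)" and j="\<lambda>y. y / (1 - y)"])
    fix y :: 'a assume "y \<in> UNIV - {1}"
    then have y: "1 - y \<noteq> 0" by simp
    show inv: "y / (1 - y) / (1 + y / (1 - y)) = y" using y by (simp add: field_simps)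
    show "?f (y / (1 - y) / (1 + y / (1 - y))) = ?f y" by (simp only: inv)
    show "y / (1 - y) \<in> UNIV - {-1}" using y by (simp add: field_simps)
  next
    fix t :: 'a assume "t \<in> UNIV - {-1}"
    then have t: "1 + t \<noteq> 0" by (metis DiffD2 add_eq_0_iff singletonI)
    show "t / (1 + t) / (1 - t / (1 + t)) = t" using t by (simp add: field_simps)
    show "t / (1 + t) \<in> UNIV - {1}" using t by (simp add: field_simps)
  qed
  also have "\<dots> = (\<Sum>t\<in>UNIV - {-1}. ?h t)"
    using subst by (intro sum.cong) simp_all
  also have "\<dots> = (\<Sum>t\<in>UNIV. ?h t)"
    by (rule sum.mono_neutral_left) (simp_all add: mult_chars_zero[OF \<psi>])
  finally show ?thesis .
qed

text \<open>Only \<open>u = (1 - y)/(1 - y + x y)\<close> can satisfy the condition; if the denominator vanishes there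
  is no solution, matching \<open>A\<^sub>0 0 = 0\<close> since division by zero yields \<open>0\<close>.\<close>
lemma sum_if_div_one_minus_prod_eq_one:
  fixes A0 A1 B1 :: "'a::{finite,field} \<Rightarrow> complex"
  assumes A0: "A0 \<in> mult_chars" and A1: "A1 \<in> mult_chars" and B1: "B1 \<in> mult_chars"
    and x: "x \<noteq> 0"
  shows "(\<Sum>u\<in>UNIV. if x * u * y / ((1 - u) * (1 - y)) = 1
                      then A0 u * A1 y * inverse (B1 (1 - y)) else 0) =
         A0 ((1 - y) / (1 - y + x * y)) * A1 y * inverse (B1 (1 - y))"
proof (cases "y = 0 \<or> y = 1")
  case True
  then have T0: "A0 u * A1 y * inverse (B1 (1 - y)) = 0" for u
    by (auto simp: mult_chars_zero[OF A1] mult_chars_zero[OF B1])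
  show ?thesis by (simp only: T0 if_cancel sum.neutral_const cong: if_cong)
next
  case False
  then have z: "x * u * y / ((1 - u) * (1 - y)) = 1 \<longleftrightarrow> (1 - y + x * y) * u = 1 - y" for u
    using div_one_minus_prod_eq_one_iff x by blast
  show ?thesis
  proof (cases "1 - y + x * y = 0")
    case True
    then show ?thesis unfolding z using False by (simp add: mult_chars_zero[OF A0])
  next
    case nz: False
    have "x * u * y / ((1 - u) * (1 - y)) = 1 \<longleftrightarrow> u = (1 - y) / (1 - y + x * y)" for u
      unfolding z using nz by (auto simp: field_simps)
    then show ?thesis unfolding z by simp
  qed
qed

context char_generator
begin

lemma sum_mult_chars_double_sum:
  fixes T :: "'b \<Rightarrow> 'c \<Rightarrow> complex" and z :: "'b \<Rightarrow> 'c \<Rightarrow> 'a"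
  shows "(\<Sum>\<phi>\<in>mult_chars. \<Sum>u\<in>U. \<Sum>y\<in>Y. T u y * \<phi> (z u y)) =
    of_nat n * (\<Sum>y\<in>Y. \<Sum>u\<in>U. if z u y = 1 then T u y else 0)"
proof -
  have "(\<Sum>\<phi>\<in>mult_chars. \<Sum>u\<in>U. \<Sum>y\<in>Y. T u y * \<phi> (z u y)) =
        (\<Sum>u\<in>U. \<Sum>\<phi>\<in>mult_chars. \<Sum>y\<in>Y. T u y * \<phi> (z u y))"
    by (rule sum.swap)
  also have "\<dots> = (\<Sum>u\<in>U. \<Sum>y\<in>Y. \<Sum>\<phi>\<in>mult_chars. T u y * \<phi> (z u y))"
    by (rule sum.cong[OF refl]) (rule sum.swap)
  also have "\<dots> = (\<Sum>u\<in>U. \<Sum>y\<in>Y. T u y * (\<Sum>\<phi>\<in>mult_chars. \<phi> (z u y)))"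
    by (simp only: sum_distrib_left[symmetric])
  also have "\<dots> = of_nat n * (\<Sum>u\<in>U. \<Sum>y\<in>Y. if z u y = 1 then T u y else 0)"
    unfolding sum_mult_chars sum_distrib_left by (intro sum.cong refl) simp
  also have "(\<Sum>u\<in>U. \<Sum>y\<in>Y. if z u y = 1 then T u y else 0) =
        (\<Sum>y\<in>Y. \<Sum>u\<in>U. if z u y = 1 then T u y else 0)"
    by (rule sum.swap)
  finally show ?thesis .
qed

lemma greene_2F1_integral:
  fixes A0 A1 B1 :: "'a \<Rightarrow> complex"
  assumes A0: "A0 \<in> mult_chars" and A1: "A1 \<in> mult_chars" and B1: "B1 \<in> mult_chars"
    and x: "x \<noteq> 0"
  shows "greene_2F1 A0 A1 B1 x = B1 (-1) / of_nat (card (UNIV::'a set)) *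
           (\<Sum>y\<in>UNIV. A0 ((1 - y) / (1 - y + x * y)) * A1 y * inverse (B1 (1 - y)))"
proof -
  define q where "q = (of_nat (card (UNIV::'a set)) :: complex)"
  define T where "T u y = A0 u * A1 y * inverse (B1 (1 - y))" for u y
  define z where "z u y = x * u * y / ((1 - u) * (1 - y))" for u y
  have binom:
    "greene_binom (char_mult A0 \<phi>) \<phi> * greene_binom (char_mult A1 \<phi>) (char_mult B1 \<phi>) * \<phi> x =
     B1 (-1) / q ^ 2 * (\<Sum>u\<in>UNIV. \<Sum>y\<in>UNIV. T u y * \<phi> (z u y))"
    if "\<phi> \<in> mult_chars" for \<phi>
    unfolding q_def T_def z_def by (rule greene_binom_product[OF that])
  have "greene_2F1 A0 A1 B1 x =
        q / (q - 1) *
        (\<Sum>\<phi>\<in>mult_chars. B1 (-1) / q ^ 2 * (\<Sum>u\<in>UNIV. \<Sum>y\<in>UNIV. T u y * \<phi> (z u y)))"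
    unfolding greene_2F1_def q_def[symmetric]
    by (rule arg_cong[where f="(*) (q / (q - 1))"], rule sum.cong[OF refl], rule binom)
  also have "\<dots> = q / (q - 1) * (B1 (-1) / q ^ 2) * of_nat n *
      (\<Sum>y\<in>UNIV. \<Sum>u\<in>UNIV. if z u y = 1 then T u y else 0)"
    by (simp only: sum_distrib_left[symmetric] sum_mult_chars_double_sum mult.assoc)
  also have "(\<Sum>y\<in>UNIV. \<Sum>u\<in>UNIV. if z u y = 1 then T u y else 0) =
      (\<Sum>y\<in>UNIV. T ((1 - y) / (1 - y + x * y)) y)"
    unfolding T_def z_def by (intro sum.cong refl sum_if_div_one_minus_prod_eq_one A0 A1 B1 x)
  also have "q / (q - 1) * (B1 (-1) / q ^ 2) * of_nat n = B1 (-1) / q"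
    using n_pos by (simp add: q_def n_def of_nat_diff power2_eq_square)
  finally show ?thesis unfolding T_def q_def .
qed

lemma greene_2F1_minus_one:
  fixes \<psi> A :: "'a \<Rightarrow> complex"
  assumes \<psi>: "\<psi> \<in> mult_chars" and A: "A \<in> mult_chars"
  shows "greene_2F1 (char_inv \<psi>) A (char_mult A \<psi>) (-1) =
         A (-1) * \<psi> (-1) / of_nat (card (UNIV::'a set)) * (\<Sum>t\<in>UNIV. \<psi> (1 - t) * \<psi> (1 + t) * A t)"
proof -
  have "greene_2F1 (char_inv \<psi>) A (char_mult A \<psi>) (-1) =
        A (-1) * \<psi> (-1) / of_nat (card (UNIV::'a set)) *
        (\<Sum>y\<in>UNIV. inverse (\<psi> ((1 - y) / (1 - 2 * y))) * A y * inverse (A (1 - y) * \<psi> (1 - y)))"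
    using greene_2F1_integral[OF char_inv_in_mult_chars[OF \<psi>] A char_mult_in_mult_chars[OF A \<psi>]]
    by (simp add: char_inv_def char_mult_def)
  then show ?thesis by (simp only: sum_subst_div_one_plus[OF \<psi> A])
qed

end

section \<open>Diagonal matrices and determinants\<close>

definition diag_mat_of :: "nat \<Rightarrow> (nat \<Rightarrow> 'a::zero) \<Rightarrow> 'a mat" where
  "diag_mat_of k f = mat k k (\<lambda>(i, j). if i = j then f i else 0)"

lemma diag_mat_of_carrier [simp]: "diag_mat_of k f \<in> carrier_mat k k"
  by (simp add: diag_mat_of_def)

lemma dim_diag_mat_of [simp]:
  "dim_row (diag_mat_of k f) = k" "dim_col (diag_mat_of k f) = k"
  by (simp_all add: diag_mat_of_def)

lemma det_diag_mat_of: "det (diag_mat_of k f) = (\<Prod>i<k. f i)"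
proof -
  have "upper_triangular (diag_mat_of k f)" by (auto simp: upper_triangular_def diag_mat_of_def)
  then have "det (diag_mat_of k f) = prod_list (diag_mat (diag_mat_of k f))"
    by (rule det_upper_triangular[of _ k]) simp
  also have "\<dots> = (\<Prod>i<k. f i)"
    by (simp add: prod_list_diag_prod diag_mat_of_def atLeast0LessThan)
  finally show ?thesis .
qed

lemma diag_mat_of_mult:
  assumes "A \<in> carrier_mat k l"
  shows "diag_mat_of k f * A = mat k l (\<lambda>(i, j). f i * A $$ (i, j))"
proof (rule eq_matI)
  fix i j assume "i < dim_row (mat k l (\<lambda>(i, j). f i * A $$ (i, j)))"
    "j < dim_col (mat k l (\<lambda>(i, j). f i * A $$ (i, j)))"
  then have ij: "i < k" "j < l" by auto
  then have "(diag_mat_of k f * A) $$ (i, j) = (\<Sum>h<k. (if i = h then f i else 0) * A $$ (h, j))"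
    using assms by (simp add: diag_mat_of_def scalar_prod_def atLeast0LessThan)
  also have "\<dots> = (\<Sum>h<k. if h = i then f i * A $$ (i, j) else 0)" by (rule sum.cong) auto
  also have "\<dots> = f i * A $$ (i, j)" using ij by simp
  finally show "(diag_mat_of k f * A) $$ (i, j) = mat k l (\<lambda>(i, j). f i * A $$ (i, j)) $$ (i, j)"
    using ij by simp
qed (use assms in auto)

lemma mult_diag_mat_of:
  assumes "A \<in> carrier_mat k l"
  shows "A * diag_mat_of l f = mat k l (\<lambda>(i, j). A $$ (i, j) * f j)"
proof (rule eq_matI)
  fix i j assume "i < dim_row (mat k l (\<lambda>(i, j). A $$ (i, j) * f j))"
    "j < dim_col (mat k l (\<lambda>(i, j). A $$ (i, j) * f j))"
  then have ij: "i < k" "j < l" by auto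
  then have "(A * diag_mat_of l f) $$ (i, j) = (\<Sum>h<l. A $$ (i, h) * (if h = j then f h else 0))"
    using assms by (simp add: diag_mat_of_def scalar_prod_def atLeast0LessThan)
  also have "\<dots> = (\<Sum>h<l. if h = j then A $$ (i, j) * f j else 0)" by (rule sum.cong) auto
  also have "\<dots> = A $$ (i, j) * f j" using ij by simp
  finally show "(A * diag_mat_of l f) $$ (i, j) = mat k l (\<lambda>(i, j). A $$ (i, j) * f j) $$ (i, j)"
    using ij by simp
qed (use assms in auto)

lemma det_eq_of_mult_eq:
  fixes B V D M :: "'a::idom mat"
  assumes "B \<in> carrier_mat k k" "V \<in> carrier_mat k k" "D \<in> carrier_mat k k" "M \<in> carrier_mat k k"
    and "B * V = D * V * M" and "det V \<noteq> 0"
  shows "det B = det D * det M"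
proof -
  have "det B * det V = det (D * V * M)"
    by (simp add: det_mult[OF assms(1,2), symmetric] assms(5))
  also have "\<dots> = det D * det M * det V"
    by (simp add: det_mult[OF mult_carrier_mat[OF assms(3,2)] assms(4)] det_mult[OF assms(3,2)])
  finally show ?thesis using assms(6) by simp
qed

section \<open>The matrix \<open>B\<close> for \<open>q \<equiv> 5 (mod 8)\<close>\<close>

locale char_generator_5_mod_8 = char_generator g \<chi> n for g :: "'a::{finite,field}" and \<chi> n +
  fixes m :: nat
  assumes card_mod_8: "card (UNIV::'a set) mod 8 = 5"
  defines m_def: "m \<equiv> n div 4"
begin

lemma n_eq_4m: "n = 4 * m" and odd_m: "odd m"
proof -
  have "Suc n = card (UNIV::'a set)" using n_pos by (simp add: n_def)
  then have "Suc n mod 8 = 5" using card_mod_8 by simp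
  then have "n mod 8 = 4" by (simp add: mod_Suc split: if_split_asm)
  then obtain j where "n = 8 * j + 4" by (metis div_mult_mod_eq mult.commute)
  then have "n = 4 * (2 * j + 1)" by simp
  then show "n = 4 * m" "odd m" by (simp_all add: m_def)
qed

lemma m_pos: "0 < m"
  using odd_m by (cases m) auto

lemma g_pow_2m: "g ^ (2 * m) = -1"
proof -
  have "(g ^ (2 * m) - 1) * (g ^ (2 * m) + 1) = g ^ n - 1"
    by (simp add: n_eq_4m algebra_simps flip: power_add)
  then have "(g ^ (2 * m) - 1) * (g ^ (2 * m) + 1) = 0" by (simp add: g_pow_n)
  moreover have "g ^ (2 * m) \<noteq> 1"
    using g_pow_eq_one_iff m_pos by (simp add: n_eq_4m)
  ultimately show ?thesis by (simp add: eq_neg_iff_add_eq_0)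
qed

lemma minus_one_ne_one: "(-1::'a) \<noteq> 1"
  using g_pow_2m g_pow_eq_iff[of "2 * m" 0] m_pos by (simp add: n_eq_4m)

lemma two_nonzero: "(2::'a) \<noteq> 0"
  using minus_one_ne_one by (metis add_eq_0_iff2 one_add_one)

lemma chi_minus_one: "\<chi> (-1) = -1"
proof -
  have "(\<chi> (-1) - 1) * (\<chi> (-1) + 1) = 0"
    using mult_chars_minus_one_squared[OF chi_in_mult_chars] by (simp add: algebra_simps)
  moreover have "\<chi> (-1) \<noteq> 1" using chi_eq_one_iff minus_one_ne_one by force
  ultimately show ?thesis by (simp add: eq_neg_iff_add_eq_0)
qed

lemma fourth_powers_eq_image: "fourth_powers = (\<lambda>s. g ^ (4 * s)) ` {..<m}"
proof
  show "fourth_powers \<subseteq> (\<lambda>s. g ^ (4 * s)) ` {..<m}"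
  proof
    fix y assume "y \<in> (fourth_powers :: 'a set)"
    then obtain x where "x \<noteq> 0" and y: "y = x ^ 4" unfolding fourth_powers_def by blast
    then obtain i where "y = g ^ (4 * i)"
      using g_generates by (metis power_mult mult.commute)
    also have "\<dots> = g ^ (4 * (i mod m))"
      using power_eq_power_mod[OF g_pow_n, of "4 * i"] by (simp add: n_eq_4m)
    finally show "y \<in> (\<lambda>s. g ^ (4 * s)) ` {..<m}" using m_pos by auto
  qed
  show "(\<lambda>s. g ^ (4 * s)) ` {..<m} \<subseteq> fourth_powers"
  proof
    fix y assume "y \<in> (\<lambda>s. g ^ (4 * s)) ` {..<m}"
    then obtain s where "y = (g ^ s) ^ 4" by (auto simp: mult.commute simp flip: power_mult)
    then show "y \<in> fourth_powers"
      using g_nonzero unfolding fourth_powers_def by (auto intro!: exI[of _ "g ^ s"])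
  qed
qed

lemma inj_on_g_pow_4: "inj_on (\<lambda>s. g ^ (4 * s)) {..<m}"
  by (rule inj_onI) (simp add: g_pow_eq_iff n_eq_4m)

lemma card_fourth_powers: "card (fourth_powers :: 'a set) = m"
  unfolding fourth_powers_eq_image by (simp add: card_image[OF inj_on_g_pow_4])

text \<open>Since \<open>m\<close> is odd, \<open>-1 = g\<^sup>2\<^sup>m\<close> is a square but not a fourth power.\<close>
lemma nonzero_squares_eq: "(\<lambda>t. t ^ 2) ` (UNIV - {0::'a}) = fourth_powers \<union> uminus ` fourth_powers"
proof
  show "(\<lambda>t. t ^ 2) ` (UNIV - {0::'a}) \<subseteq> fourth_powers \<union> uminus ` fourth_powers"
  proof
    fix y assume "y \<in> (\<lambda>t. t ^ 2) ` (UNIV - {0::'a})"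
    then obtain i where y: "y = g ^ (2 * i)"
      using g_generates by (auto simp: power_mult mult.commute)
    consider k where "i = 2 * k" | k where "i = 2 * k + 1" by (metis oddE evenE)
    then show "y \<in> fourth_powers \<union> uminus ` fourth_powers"
    proof cases
      case 1
      then have "y = (g ^ k) ^ 4" using y by (simp add: mult.commute flip: power_mult)
      then have "y \<in> fourth_powers"
        using g_nonzero unfolding fourth_powers_def by (auto intro!: exI[of _ "g ^ k"])
      then show ?thesis by blast
    next
      case 2
      have e: "4 * (k + (m + 1) div 2) = 2 * i + 2 * m" using 2 odd_m by (auto elim!: oddE)
      have "(g ^ (k + (m + 1) div 2)) ^ 4 = g ^ (4 * (k + (m + 1) div 2))"
        by (simp add: mult.commute flip: power_mult)
      also have "\<dots> = - y" unfolding e power_add y g_pow_2m by simp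
      finally have "y \<in> uminus ` fourth_powers"
        using g_nonzero unfolding fourth_powers_def
        by (auto intro!: image_eqI[of _ _ "- y"] exI[of _ "g ^ (k + (m + 1) div 2)"])
      then show ?thesis by blast
    qed
  qed
  show "fourth_powers \<union> uminus ` fourth_powers \<subseteq> (\<lambda>t. t ^ 2) ` (UNIV - {0::'a})"
  proof
    fix y assume "y \<in> fourth_powers \<union> uminus ` (fourth_powers :: 'a set)"
    then obtain x where x: "x \<noteq> 0" and "y = x ^ 4 \<or> y = - (x ^ 4)"
      unfolding fourth_powers_def by blast
    then show "y \<in> (\<lambda>t. t ^ 2) ` (UNIV - {0})"
    proof (elim disjE)
      assume "y = x ^ 4"
      then have "y = (x ^ 2) ^ 2" by simp
      then show ?thesis using x by (intro image_eqI[of _ _ "x ^ 2"]) simp_all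
    next
      assume "y = - (x ^ 4)"
      then have "y = (g ^ m * x ^ 2) ^ 2"
        using g_pow_2m by (simp add: power_mult_distrib power_mult[symmetric] mult.commute)
      then show ?thesis using x g_nonzero by (intro image_eqI[of _ _ "g ^ m * x ^ 2"]) simp_all
    qed
  qed
qed

lemma fourth_powers_disjoint_uminus: "fourth_powers \<inter> uminus ` fourth_powers = ({} :: 'a set)"
proof (rule ccontr)
  assume "fourth_powers \<inter> uminus ` fourth_powers \<noteq> ({} :: 'a set)"
  then obtain x w :: 'a where "x \<noteq> 0" "w \<noteq> 0" "x ^ 4 = - (w ^ 4)"
    unfolding fourth_powers_def by blast
  then have "(x / w) ^ 4 = -1" "x / w \<noteq> 0" by (simp_all add: power_divide)
  then obtain j where "g ^ (4 * j) = g ^ (2 * m)"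
    using g_generates g_pow_2m by (metis power_mult mult.commute)
  then have "4 * (j mod m) = 2 * m" using m_pos by (simp add: g_pow_eq_iff n_eq_4m)
  then have "m = 2 * (j mod m)" by simp
  then show False using odd_m by (metis dvd_triv_left)
qed

lemma sum_fourth_powers: "(\<Sum>t\<in>fourth_powers. f t) = (\<Sum>s<m. f (g ^ (4 * s)))"
  unfolding fourth_powers_eq_image by (rule sum.reindex[OF inj_on_g_pow_4, unfolded comp_def])

lemma prod_fourth_powers: "(\<Prod>t\<in>fourth_powers. f t) = (\<Prod>s<m. f (g ^ (4 * s)))"
  unfolding fourth_powers_eq_image by (rule prod.reindex[OF inj_on_g_pow_4, unfolded comp_def])

definition B_eigenvalue :: "('a \<Rightarrow> complex) \<Rightarrow> nat \<Rightarrow> complex" where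
  "B_eigenvalue \<psi> l = (\<Sum>t\<in>fourth_powers. (\<psi> (1 + t) + \<psi> (1 - t)) * \<chi> t ^ (2 * l))"

lemma sum_char_one_minus_sq_eq_B_eigenvalue:
  fixes \<psi> :: "'a \<Rightarrow> complex"
  assumes \<psi>: "\<psi> \<in> mult_chars"
  shows "(\<Sum>t\<in>UNIV. \<psi> (1 - t) * \<psi> (1 + t) * char_pow \<chi> (int (4 * l)) t) = 2 * B_eigenvalue \<psi> l"
proof -
  define G where "G u = \<psi> (1 - u) * \<chi> u ^ (2 * l)" for u
  have "(\<Sum>t\<in>UNIV. \<psi> (1 - t) * \<psi> (1 + t) * char_pow \<chi> (int (4 * l)) t) =
        (\<Sum>t\<in>UNIV - {0}. G (t ^ 2))"
  proof (rule sum.mono_neutral_cong_right)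
    fix t :: 'a assume "t \<in> UNIV - {0}"
    then have "char_pow \<chi> (int (4 * l)) t = \<chi> t ^ (2 * (2 * l))"
      unfolding char_pow_of_nat by simp
    also have "\<dots> = \<chi> (t ^ 2) ^ (2 * l)"
      by (simp add: mult_chars_power[OF chi_in_mult_chars] power_mult)
    moreover have "\<psi> (1 - t) * \<psi> (1 + t) = \<psi> (1 - t ^ 2)"
      by (simp add: mult_chars_mult[OF \<psi>, symmetric] algebra_simps power2_eq_square)
    ultimately show "\<psi> (1 - t) * \<psi> (1 + t) * char_pow \<chi> (int (4 * l)) t = G (t ^ 2)"
      by (simp add: G_def)
  qed (simp_all add: char_pow_def)
  also have "\<dots> = 2 * ((\<Sum>u\<in>fourth_powers. G u) + (\<Sum>u\<in>uminus ` fourth_powers. G u))"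
    using two_nonzero fourth_powers_disjoint_uminus
    by (simp add: sum_nonzero_squares nonzero_squares_eq sum.union_disjoint)
  also have "(\<Sum>u\<in>uminus ` fourth_powers. G u) = (\<Sum>u\<in>fourth_powers. \<psi> (1 + u) * \<chi> u ^ (2 * l))"
    using mult_chars_mult[OF chi_in_mult_chars, of "-1"] chi_minus_one
    by (simp add: sum.reindex G_def power_mult)
  finally show ?thesis
    by (simp add: B_eigenvalue_def G_def sum.distrib[symmetric] algebra_simps)
qed

lemma B_eigenvalue_eq_greene_2F1:
  "B_eigenvalue (char_pow \<chi> (int r)) k =
     (-1) ^ r * (of_nat (card (UNIV::'a set)) / 2) *
     greene_2F1 (char_pow \<chi> (- int r)) (char_pow \<chi> (4 * int k)) (char_pow \<chi> (4 * int k + int r)) (-1)"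
proof -
  define q where "q = (of_nat (card (UNIV::'a set)) :: complex)"
  define \<psi> where "\<psi> = char_pow \<chi> (int r)"
  define A where "A = char_pow \<chi> (4 * int k)"
  have A_nat: "A = char_pow \<chi> (int (4 * k))" unfolding A_def by simp
  have \<psi>: "\<psi> \<in> mult_chars" and A: "A \<in> mult_chars"
    unfolding \<psi>_def A_def by (simp_all add: char_pow_in_mult_chars chi_in_mult_chars)
  have "A (-1) = 1" "\<psi> (-1) = (-1) ^ r"
    unfolding A_nat \<psi>_def char_pow_of_nat by (simp_all add: chi_minus_one power_mult)
  moreover have "(\<Sum>t\<in>UNIV. \<psi> (1 - t) * \<psi> (1 + t) * A t) = 2 * B_eigenvalue \<psi> k"
    unfolding A_nat by (rule sum_char_one_minus_sq_eq_B_eigenvalue[OF \<psi>])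
  ultimately have F: "greene_2F1 (char_inv \<psi>) A (char_mult A \<psi>) (-1) = (-1) ^ r / q * (2 * B_eigenvalue \<psi> k)"
    using greene_2F1_minus_one[OF \<psi> A] unfolding q_def by simp
  have inv: "char_pow \<chi> (- int r) = char_inv \<psi>" unfolding \<psi>_def by (rule char_pow_uminus)
  have add: "char_pow \<chi> (4 * int k + int r) = char_mult A \<psi>"
    unfolding A_def \<psi>_def by (rule char_pow_add[OF chi_in_mult_chars])
  have cancel: "s * (q / 2) * (s / q * (2 * b)) = (s * s) * b" if "q \<noteq> 0" for s b :: complex
    using that by (simp add: field_simps)
  have "(-1) ^ r * (q / 2) * ((-1) ^ r / q * (2 * B_eigenvalue \<psi> k)) =
      ((-1) ^ r * (-1) ^ r) * B_eigenvalue \<psi> k"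
    by (rule cancel) (simp add: q_def)
  also have "(-1::complex) ^ r * (-1) ^ r = 1" by (simp flip: power_mult_distrib)
  finally have "(-1) ^ r * (q / 2) * ((-1) ^ r / q * (2 * B_eigenvalue \<psi> k)) = B_eigenvalue \<psi> k"
    by (simp only: mult_1_left)
  then show ?thesis
    unfolding inv add A_def[symmetric] \<psi>_def[symmetric] q_def[symmetric] F by (rule sym)
qed

lemma sum_chi_pow_fourth_powers:
  assumes "0 < j" "j < 2 * m"
  shows "(\<Sum>t\<in>fourth_powers. \<chi> t ^ (2 * j)) = (if j = m then of_nat m else 0)"
proof -
  define \<zeta> where "\<zeta> = \<chi> g ^ (8 * j)"
  have "(\<Sum>t\<in>fourth_powers. \<chi> t ^ (2 * j)) = (\<Sum>s<m. \<zeta> ^ s)"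
    unfolding sum_fourth_powers \<zeta>_def
    by (simp add: mult_chars_power[OF chi_in_mult_chars] mult.commute mult.left_commute
        flip: power_mult)
  moreover have "\<zeta> = 1 \<longleftrightarrow> j = m"
  proof -
    have "\<zeta> = 1 \<longleftrightarrow> m dvd 2 * j"
      unfolding \<zeta>_def chi_g_pow_eq_one_iff n_eq_4m by simp
    also have "\<dots> \<longleftrightarrow> m dvd j" using odd_m by (simp add: coprime_dvd_mult_right_iff)
    also have "\<dots> \<longleftrightarrow> j = m" using assms by (auto elim!: dvdE)
    finally show ?thesis .
  qed
  moreover have "\<zeta> ^ m = 1"
  proof -
    have "4 * m dvd 8 * j * m" by (rule dvdI[of _ _ "2 * j"]) simp
    then show ?thesis unfolding \<zeta>_def power_mult[symmetric] chi_g_pow_eq_one_iff n_eq_4m .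
  qed
  ultimately show ?thesis by (simp add: sum_gp_strict)
qed

lemma prod_chi_pow_fourth_powers: "(\<Prod>t\<in>fourth_powers. \<chi> t ^ r) = 1"
proof -
  have "(\<Prod>t\<in>fourth_powers. \<chi> t ^ r) = (\<Prod>s<m. (\<chi> g ^ r) ^ (4 * s))"
    unfolding prod_fourth_powers
    by (simp add: mult_chars_power[OF chi_in_mult_chars] mult.commute flip: power_mult)
  also have "\<dots> = (\<chi> g ^ r) ^ (\<Sum>s<m. 4 * s)" by (simp add: power_sum)
  also have "(\<Sum>s<m. 4 * s) = n * ((m - 1) div 2)"
  proof -
    have "2 * (\<Sum>s<m. s) = m * (m - 1)" by (induction m) (auto simp: algebra_simps)
    then show ?thesis using odd_m n_eq_4m by (auto simp: sum_distrib_left[symmetric] elim!: oddE)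
  qed
  also have "(\<chi> g ^ r) ^ (n * ((m - 1) div 2)) = 1"
    by (metis chi_g_pow_eq_one_iff dvd_triv_left power_one power_mult mult.commute)
  finally show ?thesis .
qed

lemma bij_betw_nth_fourth_powers:
  fixes as :: "'a list"
  assumes "distinct as" "set as = fourth_powers"
  shows "length as = m" and "bij_betw ((!) as) {..<m} fourth_powers"
proof -
  have "length as = card (set as)" using distinct_card[OF assms(1)] by simp
  then show "length as = m" using assms(2) card_fourth_powers by simp
  then show "bij_betw ((!) as) {..<m} fourth_powers"
    using assms by (metis bij_betw_nth lessThan_atLeast0)
qed

definition char_table :: "'a list \<Rightarrow> complex mat" where
  "char_table as = mat m m (\<lambda>(i, l). \<chi> (as ! i) ^ (2 * l))"

text \<open>By orthogonality of the characters of \<open>D\<^sub>4\<close>, the table \<open>W\<close> of their inverses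
  satisfies \<open>W V = m I\<close>.\<close>
lemma det_char_table_nonzero:
  assumes "distinct as" "set as = fourth_powers"
  shows "det (char_table as) \<noteq> 0"
proof -
  define W where "W = mat m m (\<lambda>(l, i). \<chi> (as ! i) ^ (2 * (m - l)))"
  have "W * char_table as = of_nat m \<cdot>\<^sub>m 1\<^sub>m m"
  proof (rule eq_matI)
    fix l l' assume "l < dim_row (of_nat m \<cdot>\<^sub>m (1\<^sub>m m :: complex mat))"
      "l' < dim_col (of_nat m \<cdot>\<^sub>m (1\<^sub>m m :: complex mat))"
    then have l: "l < m" "l' < m" by auto
    have "(W * char_table as) $$ (l, l') = (\<Sum>i<m. \<chi> (as ! i) ^ (2 * (m - l)) * \<chi> (as ! i) ^ (2 * l'))"
      using l by (simp add: W_def char_table_def scalar_prod_def atLeast0LessThan)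
    also have "\<dots> = (\<Sum>i<m. \<chi> (as ! i) ^ (2 * (m - l + l')))"
      by (simp add: power_add[symmetric] distrib_left)
    also have "\<dots> = (\<Sum>t\<in>fourth_powers. \<chi> t ^ (2 * (m - l + l')))"
      by (rule sum.reindex_bij_betw[OF bij_betw_nth_fourth_powers(2)[OF assms]])
    also have "\<dots> = (of_nat m \<cdot>\<^sub>m 1\<^sub>m m) $$ (l, l')"
      using l by (subst sum_chi_pow_fourth_powers) auto
    finally show "(W * char_table as) $$ (l, l') = (of_nat m \<cdot>\<^sub>m 1\<^sub>m m) $$ (l, l')" .
  qed (simp_all add: W_def char_table_def)
  moreover have "det (W * char_table as) = det W * det (char_table as)"
    by (rule det_mult[of _ m]) (simp_all add: W_def char_table_def)
  ultimately have "det W * det (char_table as) = of_nat m ^ m"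
    by simp
  then show ?thesis using m_pos by auto
qed

lemma B_mat_mult_char_table:
  assumes "distinct as" "set as = fourth_powers" and \<psi>: "\<psi> \<in> mult_chars"
  shows "B_mat \<psi> as * char_table as =
         diag_mat_of m (\<lambda>i. \<psi> (as ! i)) * char_table as * diag_mat_of m (B_eigenvalue \<psi>)"
proof (rule eq_matI)
  note len = bij_betw_nth_fourth_powers(1)[OF assms(1,2)]
  note bij = bij_betw_nth_fourth_powers(2)[OF assms(1,2)]
  fix i l assume "i < dim_row (diag_mat_of m (\<lambda>i. \<psi> (as ! i)) * char_table as * diag_mat_of m (B_eigenvalue \<psi>))"
    "l < dim_col (diag_mat_of m (\<lambda>i. \<psi> (as ! i)) * char_table as * diag_mat_of m (B_eigenvalue \<psi>))"
  then have i: "i < m" and l: "l < m" by (simp_all add: char_table_def)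
  have a: "as ! i \<in> fourth_powers" using bij i by (auto simp: bij_betw_def)
  have "(B_mat \<psi> as * char_table as) $$ (i, l) =
        (\<Sum>j<m. (\<psi> (as ! i + as ! j) + \<psi> (as ! i - as ! j)) * \<chi> (as ! j) ^ (2 * l))"
    using i l len by (simp add: B_mat_def char_table_def scalar_prod_def atLeast0LessThan)
  also have "\<dots> = (\<Sum>u\<in>fourth_powers. (\<psi> (as ! i + u) + \<psi> (as ! i - u)) * \<chi> u ^ (2 * l))"
    by (rule sum.reindex_bij_betw[OF bij])
  also have "\<dots> = \<psi> (as ! i) * \<chi> (as ! i) ^ (2 * l) * B_eigenvalue \<psi> l"
    unfolding B_eigenvalue_def
    by (rule sum_char_plus_minus_rescale[OF \<psi> _ bij_betw_mult_fourth_powers[OF a]])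
       (simp add: mult_chars_mult[OF chi_in_mult_chars] power_mult_distrib)
  also have "\<dots> =
      (diag_mat_of m (\<lambda>i. \<psi> (as ! i)) * char_table as * diag_mat_of m (B_eigenvalue \<psi>)) $$ (i, l)"
    using i l by (simp add: char_table_def diag_mat_of_mult[of _ m m] mult_diag_mat_of[of _ m m])
  finally show "(B_mat \<psi> as * char_table as) $$ (i, l) = \<dots>" .
qed (simp_all add: B_mat_def char_table_def bij_betw_nth_fourth_powers(1)[OF assms(1,2)])

lemma det_B_mat:
  assumes "distinct as" "set as = fourth_powers"
  shows "det (B_mat (char_pow \<chi> (int r)) as) = (\<Prod>l<m. B_eigenvalue (char_pow \<chi> (int r)) l)"
proof -
  define \<psi> where "\<psi> = char_pow \<chi> (int r)"
  have \<psi>: "\<psi> \<in> mult_chars" unfolding \<psi>_def by (simp add: char_pow_in_mult_chars chi_in_mult_chars)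
  have "det (B_mat \<psi> as) =
      det (diag_mat_of m (\<lambda>i. \<psi> (as ! i))) * det (diag_mat_of m (B_eigenvalue \<psi>))"
    by (rule det_eq_of_mult_eq[where k = m, OF _ _ _ _ B_mat_mult_char_table[OF assms \<psi>]
          det_char_table_nonzero[OF assms]])
       (simp_all add: B_mat_def char_table_def bij_betw_nth_fourth_powers(1)[OF assms])
  also have "det (diag_mat_of m (\<lambda>i. \<psi> (as ! i))) = (\<Prod>t\<in>fourth_powers. \<psi> t)"
    unfolding det_diag_mat_of by (rule prod.reindex_bij_betw[OF bij_betw_nth_fourth_powers(2)[OF assms]])
  also have "\<dots> = (\<Prod>t\<in>fourth_powers. \<chi> t ^ r)"
    by (rule prod.cong) (simp_all add: \<psi>_def char_pow_of_nat fourth_powers_nonzero)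
  finally show ?thesis
    by (simp add: prod_chi_pow_fourth_powers det_diag_mat_of \<psi>_def)
qed

end

theorem theorem1p2:
  fixes \<chi> :: "'a::{finite,field} \<Rightarrow> complex" and r :: nat and as :: "'a list"
  assumes "(card (UNIV::'a set)) mod 8 = 5"
    and "is_char_generator \<chi>"
    and "1 \<le> r" and "r \<le> (card (UNIV::'a set)) - 2"
    and "distinct as" and "set as = fourth_powers"
  shows "det (B_mat (char_pow \<chi> (int r)) as) =
    (-1) ^ r * (of_nat (card (UNIV::'a set)) / 2) ^ (((card (UNIV::'a set)) - 1) div 4) *
    (\<Prod>k\<in>{0..((card (UNIV::'a set)) - 5) div 4}.
       greene_2F1 (char_pow \<chi> (- int r)) (char_pow \<chi> (4 * int k))
                  (char_pow \<chi> (4 * int k + int r)) (-1))"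
proof -
  define m where "m = (card (UNIV::'a set) - 1) div 4"
  obtain g :: 'a where "g \<noteq> 0" "\<forall>x. x \<noteq> 0 \<longrightarrow> (\<exists>i. x = g ^ i)"
    using finite_field_mult_generator by blast
  then interpret char_generator_5_mod_8 g \<chi> "card (UNIV::'a set) - 1" m
    using assms(1,2) by unfold_locales (simp_all add: m_def)
  let ?q = "of_nat (card (UNIV::'a set)) :: complex"
  let ?F = "\<lambda>k. greene_2F1 (char_pow \<chi> (- int r)) (char_pow \<chi> (4 * int k))
                  (char_pow \<chi> (4 * int k + int r)) (-1)"
  have "det (B_mat (char_pow \<chi> (int r)) as) = (\<Prod>k<m. B_eigenvalue (char_pow \<chi> (int r)) k)"
    by (rule det_B_mat[OF assms(5,6)])
  also have "\<dots> = (\<Prod>k<m. (-1) ^ r * (?q / 2) * ?F k)"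
    by (simp only: B_eigenvalue_eq_greene_2F1)
  also have "\<dots> = ((-1) ^ r) ^ m * (?q / 2) ^ m * (\<Prod>k<m. ?F k)"
    by (simp only: prod.distrib prod_constant card_lessThan)
  also have "((-1::complex) ^ r) ^ m = ((-1) ^ m) ^ r"
    by (simp only: power_mult[symmetric] mult.commute)
  also have "(-1::complex) ^ m = -1"
    using odd_m by simp
  also have "{..<m} = {0..(card (UNIV::'a set) - 5) div 4}"
    using m_pos by (auto simp: m_def)
  finally show ?thesis by (simp only: m_def)
qed

end
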